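(* Let $E(\lambda,\eta,\xi)$ be analytic in a neighborhood of $0\in\mathbb{C}^3$ with Taylor coefficients $a_{(i,j,k)}\in(\sqrt{-1})^{j+k}\mathbb{R}$, such that $E(\lambda,-\eta,\xi)=E(\lambda,\eta,\xi)$, $E(0,0,\xi)\equiv0$, $a_{(1,0,0)}=0$, $a_{(2,0,0)}\ne0$, $a_{(0,2,0)}\ne0$. Write near the origin $E=Wh$ with $h(0,0,0)\ne0$ and $W(\lambda;\eta,\xi)=\lambda^2+b(\eta,\xi)\lambda+c(\eta,\xi)$, $b=b_{01}\xi+b_{02}\xi^2+b_{20}\eta^2+O(|\eta|+|\xi|)^3$, $c=\eta^2(c_{20}+c_{21}\xi+O(|\eta|+|\xi|)^2)$, and assume $c_{20}>0$. Define ${\rm ind}_1=b_{02}$, ${\rm ind}_2=b_{20}$, ${\rm ind}_3=c_{21}^2(b_{01}^2b_{20}^2-2b_{01}b_{20}c_{21}+4b_{02}b_{20}c_{20}+c_{21}^2)$, ${\rm ind}_4=-b_{01}b_{20}c_{21}+2b_{02}b_{20}c_{20}+c_{21}^2$, ${\rm ind}_5=-b_{01}c_{21}+b_{02}c_{20}$. Suppose one of: (i) ${\rm ind}_1<0$ or ${\rm ind}_2<0$; (ii) ${\rm ind}_1>0$, ${\rm ind}_2>0$, ${\rm ind}_3>0$ and ${\rm ind}_4\le0$; (iii) ${\rm ind}_1>0$, ${\rm ind}_2>0$, ${\rm ind}_3>0$ and ${\rm ind}_5<0$. Then for every $r>0$ there exist real $(\eta,\xi)$ with $0<|\eta|+|\xi|<r$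 and a root $\lambda$ of $W(\cdot;\eta,\xi)$ (a zero of $E(\cdot,\eta,\xi)$ near $0$) with $\Re\lambda>0$.
   Context: In the paper, $E$ is the periodic Evans–Lopatinsky determinant of a planar roll wave of the inviscid Saint-Venant equations, and the conclusion is low-frequency spectral instability. Under the hypotheses, $b_{02},b_{20},c_{20}\in\mathbb{R}$ and $b_{01},c_{21}\in i\mathbb{R}$, so the indices are real. *)

theory Defs
  imports "HOL-Analysis.Analysis"
begin

text \<open>A function analytic near 0 in C^3 is one admitting such a representation
  for some rho > 0; then a are its Taylor coefficients.\<close>
definition ps3 :: "(nat \<Rightarrow> nat \<Rightarrow> nat \<Rightarrow> complex) \<Rightarrow> real
    \<Rightarrow> (complex \<Rightarrow> complex \<Rightarrow> complex \<Rightarrow> complex) \<Rightarrow> bool" where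
  "ps3 a rho F \<longleftrightarrow> rho > 0 \<and>
     (\<forall>x y z. cmod x < rho \<longrightarrow> cmod y < rho \<longrightarrow> cmod z < rho \<longrightarrow>
        ((\<lambda>(i,j,k). a i j k * x ^ i * y ^ j * z ^ k) has_sum F x y z) UNIV)"

definition ps2 :: "(nat \<Rightarrow> nat \<Rightarrow> complex) \<Rightarrow> real
    \<Rightarrow> (complex \<Rightarrow> complex \<Rightarrow> complex) \<Rightarrow> bool" where
  "ps2 a rho F \<longleftrightarrow> rho > 0 \<and>
     (\<forall>y z. cmod y < rho \<longrightarrow> cmod z < rho \<longrightarrow>
        ((\<lambda>(j,k). a j k * y ^ j * z ^ k) has_sum F y z) UNIV)"

end

theory Submission
  imports Defs
begin

text \<open>
  A root of \<open>l\<^sup>2 + b l + c\<close> with positive real part exists as soon as \<open>Re b < 0\<close> or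
  \<open>hurwitz_det b c < 0\<close>: for roots \<open>l1, l2\<close> one has \<open>b = - (l1 + l2)\<close>, and
  \<open>hurwitz_det b c = Re l1 Re l2 |cnj l1 + l2|\<^sup>2\<close>.

  Along a ray \<open>(eta, xi) = \<sigma> (t, s)\<close>, \<open>\<sigma> \<rightarrow> 0+\<close>, the expansions of \<open>b\<close> and \<open>c\<close> give
  \<open>b = \<sigma> \<beta>1 + \<sigma>\<^sup>2 \<beta>2 + o(\<sigma>\<^sup>2)\<close> and \<open>c = \<sigma>\<^sup>2 \<gamma>2 + \<sigma>\<^sup>3 \<gamma>3 + o(\<sigma>\<^sup>3)\<close> with \<open>\<gamma>2\<close> real.
  If \<open>Re \<beta>1 = 0\<close>, then \<open>Re b, Im b, Re c, Im c\<close> are of orders \<open>\<sigma>\<^sup>2, \<sigma>, \<sigma>\<^sup>2, \<sigma>\<^sup>3\<close>, for which \<open>hurwitz_det\<close> is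
  homogeneous of degree 6; so strict sign conditions on the leading coefficients persist for
  small \<open>\<sigma>\<close>. The indices are what is needed to find a ray with such leading coefficients:
  \<open>(0, - sgn (Re b01))\<close> if \<open>Re b01 \<noteq> 0\<close>, \<open>(0, 1)\<close> if \<open>ind1 < 0\<close>, \<open>(1, 0)\<close> if \<open>ind2 < 0\<close>, and
  \<open>(sqrt u, 1)\<close> in cases (ii) and (iii), where the leading Hurwitz determinant is \<open>u\<close> times a
  quadratic in \<open>u\<close> that is negative at \<open>u = 0\<close> in case (iii) and at its vertex in case (ii).
  Since \<open>b\<close> and \<open>c\<close> vanish at the origin the root is small, hence a zero of \<open>E = W h\<close>.

  In particular
  \<open>b01\<close> need not be imaginary.
\<close>

section \<open>Roots of complex quadratics\<close>

definition hurwitz_det :: "complex \<Rightarrow> complex \<Rightarrow> real" where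
  "hurwitz_det b c = (Re b)\<^sup>2 * Re c + Re b * Im b * Im c - (Im c)\<^sup>2"

lemma hurwitz_det_roots:
  "hurwitz_det (- (l1 + l2)) (l1 * l2) = Re l1 * Re l2 * (cmod (cnj l1 + l2))\<^sup>2"
  unfolding hurwitz_det_def cmod_power2 by (simp add: power2_eq_square algebra_simps)

lemma hurwitz_det_scale:
  assumes "Re b = \<sigma>\<^sup>2 * Re B" "Im b = \<sigma> * Im B" "Re c = \<sigma>\<^sup>2 * Re C" "Im c = \<sigma> ^ 3 * Im C"
  shows "hurwitz_det b c = \<sigma> ^ 6 * hurwitz_det B C"
  using assms by (simp add: hurwitz_det_def power2_eq_square power3_eq_cube
      numeral_eq_Suc algebra_simps)

lemma quadratic_roots:
  fixes b c :: complex
  obtains l1 l2 where "l1 + l2 = - b" "l1 * l2 = c" "l1\<^sup>2 + b * l1 + c = 0" "l2\<^sup>2 + b * l2 + c = 0"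
proof -
  define w where "w = csqrt (b\<^sup>2 - 4 * c)"
  define l1 where "l1 = (- b + w) / 2"
  define l2 where "l2 = (- b - w) / 2"
  have sum: "l1 + l2 = - b" by (simp add: l1_def l2_def field_simps)
  have "l1 * l2 = (b\<^sup>2 - w\<^sup>2) / 4" by (simp add: l1_def l2_def field_simps power2_eq_square)
  then have prod: "l1 * l2 = c" by (simp add: w_def)
  have "(l - l1) * (l - l2) = l\<^sup>2 - (l1 + l2) * l + l1 * l2" for l
    by (simp add: power2_eq_square algebra_simps)
  then have "(l - l1) * (l - l2) = l\<^sup>2 + b * l + c" for l
    using sum prod by simp
  then show ?thesis using that sum prod by (metis diff_self mult_zero_left mult_zero_right)
qed

lemma quadratic_root_norm_le:
  fixes b c l :: complex
  assumes "l\<^sup>2 + b * l + c = 0"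
  shows "cmod l \<le> cmod b + sqrt (cmod c)"
proof (rule ccontr)
  assume "\<not> ?thesis"
  then have big: "cmod b + sqrt (cmod c) < cmod l" by simp
  then have sqrt_le: "sqrt (cmod c) \<le> cmod l"
    using norm_ge_zero[of b] by linarith
  have "l * l = - (b * l + c)"
    using assms by (metis add.assoc eq_neg_iff_add_eq_0 power2_eq_square)
  then have "cmod l * cmod l = cmod (b * l + c)"
    by (metis norm_minus_cancel norm_mult)
  also have "\<dots> \<le> cmod b * cmod l + cmod c"
    by (metis norm_mult norm_triangle_ineq)
  also have "cmod c = sqrt (cmod c) * sqrt (cmod c)"
    by simp
  also have "cmod b * cmod l + \<dots> \<le> cmod b * cmod l + sqrt (cmod c) * cmod l"
    using sqrt_le by (intro add_left_mono mult_left_mono) auto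
  also have "\<dots> = (cmod b + sqrt (cmod c)) * cmod l"
    by (simp add: algebra_simps)
  also have "\<dots> < cmod l * cmod l"
    using big sqrt_le by (intro mult_strict_right_mono) auto
  finally show False by simp
qed

lemma exists_quadratic_root_Re_pos:
  fixes b c :: complex
  assumes "Re b < 0 \<or> hurwitz_det b c < 0"
  obtains l where "l\<^sup>2 + b * l + c = 0" "Re l > 0" "cmod l \<le> cmod b + sqrt (cmod c)"
proof -
  obtain l1 l2 where sum: "l1 + l2 = - b" and prod: "l1 * l2 = c"
    and roots: "l1\<^sup>2 + b * l1 + c = 0" "l2\<^sup>2 + b * l2 + c = 0"
    by (rule quadratic_roots)
  have "Re l1 + Re l2 > 0 \<or> Re l1 * Re l2 < 0"
  proof (cases "Re b < 0")
    case True
    then show ?thesis using arg_cong[OF sum, of Re] by simp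
  next
    case False
    then have "Re l1 * Re l2 * (cmod (cnj l1 + l2))\<^sup>2 < 0"
      using assms hurwitz_det_roots[of l1 l2] by (simp add: sum prod)
    then show ?thesis by (auto simp: mult_less_0_iff)
  qed
  then have "Re l1 > 0 \<or> Re l2 > 0" by (auto simp: mult_less_0_iff)
  then show ?thesis using that roots quadratic_root_norm_le by blast
qed

section \<open>Power series along rays\<close>

lemma norm_monomial_le_scaled:
  fixes c y z :: complex
  assumes yz: "cmod y + cmod z \<le> s" and s: "s > 0" and n: "n \<le> j + k"
  shows "cmod (c * y ^ j * z ^ k) \<le> ((cmod y + cmod z) / s) ^ n * (cmod c * s ^ (j + k))"
proof -
  let ?m = "cmod y + cmod z"
  have "cmod y ^ j * cmod z ^ k \<le> ?m ^ j * ?m ^ k"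
    by (intro mult_mono power_mono) auto
  also have "\<dots> = ?m ^ n * ?m ^ (j + k - n)"
    using n by (simp flip: power_add)
  also have "\<dots> \<le> ?m ^ n * s ^ (j + k - n)"
    using yz by (intro mult_left_mono power_mono) auto
  also have "\<dots> = (?m / s) ^ n * s ^ (j + k)"
    using s n by (simp add: power_divide power_diff)
  finally have "cmod c * (cmod y ^ j * cmod z ^ k) \<le> cmod c * ((?m / s) ^ n * s ^ (j + k))"
    by (rule mult_left_mono) simp
  then show ?thesis
    by (simp add: norm_mult norm_power mult_ac)
qed

lemma ps2_abs_summable:
  assumes "ps2 a R F" "0 \<le> s" "s < R"
  shows "(\<lambda>(j, k). cmod (a j k) * s ^ (j + k)) summable_on UNIV"
proof -
  have "cmod (of_real s) < R"
    using assms by simp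
  then have "(\<lambda>(j, k). a j k * of_real s ^ j * of_real s ^ k) summable_on UNIV"
    using assms(1) unfolding ps2_def summable_on_def by blast
  then have "(\<lambda>x. norm ((\<lambda>(j, k). a j k * of_real s ^ j * of_real s ^ k) x)) summable_on UNIV"
    using summable_on_iff_abs_summable_on_complex by blast
  also have "(\<lambda>x. norm ((\<lambda>(j, k). a j k * of_real s ^ j * of_real s ^ k) x))
      = (\<lambda>(j, k). cmod (a j k) * s ^ (j + k))"
    using assms by (auto simp: norm_mult norm_power power_add fun_eq_iff)
  finally show ?thesis .
qed

lemma ps2_remainder_bound:
  assumes ps: "ps2 a R F" and S: "finite S"
    and order: "\<And>j k. (j, k) \<notin> S \<Longrightarrow> a j k \<noteq> 0 \<Longrightarrow> n \<le> j + k"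
  obtains s K where "s > 0"
    "\<And>y z. cmod y + cmod z \<le> s \<Longrightarrow>
       cmod (F y z - (\<Sum>(j, k)\<in>S. a j k * y ^ j * z ^ k)) \<le> K * (cmod y + cmod z) ^ n"
proof -
  define s where "s = R / 2"
  have s: "0 < s" "s < R" using ps by (auto simp: s_def ps2_def)
  define g where "g = (\<lambda>(j, k). cmod (a j k) * s ^ (j + k))"
  have g_nonneg: "0 \<le> g x" for x using s by (auto simp: g_def split: prod.split)
  have g_summable: "g summable_on UNIV"
    using ps2_abs_summable[OF ps] s unfolding g_def by simp
  show ?thesis
  proof (rule that[OF s(1), of "infsum g UNIV / s ^ n"])
    fix y z :: complex
    assume yz: "cmod y + cmod z \<le> s"
    define f where "f = (\<lambda>(j, k). a j k * y ^ j * z ^ k)"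
    define C where "C = ((cmod y + cmod z) / s) ^ n"
    have C_nonneg: "0 \<le> C" using s by (simp add: C_def)
    have "cmod y < R" "cmod z < R" using yz s norm_ge_zero[of y] norm_ge_zero[of z] by linarith+
    then have "(f has_sum F y z) UNIV" using ps unfolding ps2_def f_def by simp
    moreover have "(f has_sum (\<Sum>(j, k)\<in>S. a j k * y ^ j * z ^ k)) S"
      using has_sum_finite[OF S, of f] by (simp add: f_def case_prod_beta)
    ultimately have tail: "(f has_sum (F y z - (\<Sum>(j, k)\<in>S. a j k * y ^ j * z ^ k))) (UNIV - S)"
      by (rule has_sum_Diff) auto
    have f_le: "norm (f x) \<le> C * g x" if "x \<in> UNIV - S" for x
    proof (cases x)
      case (Pair j k)
      show ?thesis
      proof (cases "a j k = 0")
        case False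
        then show ?thesis
          using norm_monomial_le_scaled[OF yz s(1) order] that
          by (simp add: Pair f_def g_def C_def)
      qed (use C_nonneg g_nonneg in \<open>simp add: Pair f_def\<close>)
    qed
    have "(g has_sum infsum g (UNIV - S)) (UNIV - S)"
      using g_summable summable_on_subset_banach has_sum_infsum by blast
    then have "cmod (F y z - (\<Sum>(j, k)\<in>S. a j k * y ^ j * z ^ k)) \<le> C * infsum g (UNIV - S)"
      by (rule norm_infsum_le[OF tail has_sum_cmult_right f_le])
    also have "\<dots> \<le> C * infsum g UNIV"
      using g_summable summable_on_subset_banach
      by (intro mult_left_mono C_nonneg infsum_mono_neutral) (auto simp: g_nonneg)
    finally show "cmod (F y z - (\<Sum>(j, k)\<in>S. a j k * y ^ j * z ^ k))
        \<le> infsum g UNIV / s ^ n * (cmod y + cmod z) ^ n"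
      by (simp add: C_def power_divide mult.commute)
  qed
qed

lemma ray_remainder_tendsto:
  fixes F :: "complex \<Rightarrow> complex \<Rightarrow> complex" and t u :: real
  assumes bound: "\<And>y z. cmod y + cmod z \<le> s \<Longrightarrow> cmod (F y z) \<le> K * (cmod y + cmod z) ^ n"
    and s: "s > 0" and mn: "m < n"
  shows "((\<lambda>\<sigma>. F (of_real (t * \<sigma>)) (of_real (u * \<sigma>)) / of_real \<sigma> ^ m) \<longlongrightarrow> 0) (at_right 0)"
proof (rule Lim_null_comparison)
  define M where "M = \<bar>t\<bar> + \<bar>u\<bar>"
  have "((\<lambda>\<sigma>. \<sigma> * M) \<longlongrightarrow> 0 * M) (at_right 0)"
    by (intro tendsto_intros)
  then have "eventually (\<lambda>\<sigma>. \<sigma> * M < s) (at_right 0)"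
    using s by (intro order_tendstoD(2)) auto
  moreover have "eventually (\<lambda>\<sigma>. \<sigma> > 0) (at_right (0::real))"
    by (simp add: eventually_at_right_less)
  ultimately show "eventually (\<lambda>\<sigma>. norm (F (of_real (t * \<sigma>)) (of_real (u * \<sigma>)) / of_real \<sigma> ^ m)
      \<le> K * M ^ n * \<sigma> ^ (n - m)) (at_right 0)"
  proof eventually_elim
    case (elim \<sigma>)
    have "cmod (of_real (t * \<sigma>)) + cmod (of_real (u * \<sigma>)) = \<sigma> * M"
      using elim by (simp only: norm_of_real abs_mult) (simp add: M_def algebra_simps)
    then have "cmod (F (of_real (t * \<sigma>)) (of_real (u * \<sigma>))) \<le> K * (\<sigma> * M) ^ n"
      using bound[of "of_real (t * \<sigma>)" "of_real (u * \<sigma>)"] elim by (simp del: of_real_mult)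
    also have "\<dots> = K * M ^ n * \<sigma> ^ (n - m) * \<sigma> ^ m"
      using mn by (simp add: power_mult_distrib mult_ac flip: power_add)
    finally show ?case
      using elim by (simp add: norm_divide norm_power pos_divide_le_eq)
  qed
  have "((\<lambda>\<sigma>. K * M ^ n * \<sigma> ^ (n - m)) \<longlongrightarrow> K * M ^ n * 0 ^ (n - m)) (at_right 0)"
    by (intro tendsto_intros)
  then show "((\<lambda>\<sigma>. K * M ^ n * \<sigma> ^ (n - m)) \<longlongrightarrow> 0) (at_right 0)"
    using mn by (simp add: zero_power)
qed

lemma ps2_ray_remainder_tendsto:
  assumes ps: "ps2 a R F" and S: "finite S"
    and order: "\<And>j k. (j, k) \<notin> S \<Longrightarrow> a j k \<noteq> 0 \<Longrightarrow> n \<le> j + k" and mn: "m < n"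
  shows "((\<lambda>\<sigma>. (F (of_real (t * \<sigma>)) (of_real (s * \<sigma>))
      - (\<Sum>(j, k)\<in>S. a j k * of_real (t * \<sigma>) ^ j * of_real (s * \<sigma>) ^ k)) / of_real \<sigma> ^ m)
      \<longlongrightarrow> 0) (at_right 0)"
proof -
  obtain s0 K where "s0 > 0" and bound: "\<And>y z. cmod y + cmod z \<le> s0 \<Longrightarrow>
      cmod (F y z - (\<Sum>(j, k)\<in>S. a j k * y ^ j * z ^ k)) \<le> K * (cmod y + cmod z) ^ n"
    using ps2_remainder_bound[OF ps S order] by blast
  show ?thesis
    using ray_remainder_tendsto[where F = "\<lambda>y z. F y z - (\<Sum>(j, k)\<in>S. a j k * y ^ j * z ^ k)",
        OF bound \<open>s0 > 0\<close> mn] by simp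
qed

lemma ps2_ray_expansion_b:
  assumes ps: "ps2 bk R b" and low: "bk 0 0 = 0" "bk 1 0 = 0" "bk 1 1 = 0"
  shows "((\<lambda>\<sigma>. (b (of_real (t * \<sigma>)) (of_real (s * \<sigma>))
      - (of_real \<sigma> * (bk 0 1 * of_real s) + of_real \<sigma> ^ 2 * (bk 0 2 * of_real s ^ 2 + bk 2 0 * of_real t ^ 2)))
      / of_real \<sigma> ^ 2) \<longlongrightarrow> 0) (at_right 0)"
proof -
  have order: "3 \<le> j + k" if "(j, k) \<notin> {(0, 1), (0, 2), (2, 0)}" "bk j k \<noteq> 0" for j k
  proof (rule ccontr)
    assume "\<not> 3 \<le> j + k"
    then have "(j, k) \<in> {(0, 0), (1, 0), (1, 1)} \<union> {(0, 1), (0, 2), (2, 0)}"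
      by fastforce
    then show False
      using that low by auto
  qed
  from ps2_ray_remainder_tendsto[OF ps _ order,
      where S = "{(0, 1), (0, 2), (2, 0)}" and m = 2 and t = t and s = s]
  show ?thesis
    by (simp add: algebra_simps)
qed

lemma ps2_ray_expansion_c:
  assumes ps: "ps2 ck R c" and low: "\<forall>k. ck 0 k = 0" "\<forall>k. ck 1 k = 0" "ck 3 0 = 0"
  shows "((\<lambda>\<sigma>. (c (of_real (t * \<sigma>)) (of_real (s * \<sigma>))
      - (of_real \<sigma> ^ 2 * (ck 2 0 * of_real t ^ 2) + of_real \<sigma> ^ 3 * (ck 2 1 * of_real t ^ 2 * of_real s)))
      / of_real \<sigma> ^ 3) \<longlongrightarrow> 0) (at_right 0)"
proof -
  have order: "4 \<le> j + k" if "(j, k) \<notin> {(2, 0), (2, 1)}" "ck j k \<noteq> 0" for j k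
  proof (rule ccontr)
    assume "\<not> 4 \<le> j + k"
    moreover have "j \<noteq> 0"
      using that(2) low(1) by metis
    moreover have "j \<noteq> 1"
      using that(2) low(2) by metis
    ultimately have "(j, k) \<in> {(3, 0)} \<union> {(2, 0), (2, 1)}"
      by (simp add: numeral_eq_Suc) presburger
    then show False
      using that low by auto
  qed
  from ps2_ray_remainder_tendsto[OF ps _ order,
      where S = "{(2, 0), (2, 1)}" and m = 3 and t = t and s = s]
  show ?thesis
    by (simp add: power2_eq_square power3_eq_cube algebra_simps)
qed

lemma tendsto_zero_of_remainder:
  fixes f p :: "real \<Rightarrow> complex"
  assumes "((\<lambda>\<sigma>. (f \<sigma> - p \<sigma>) / of_real \<sigma> ^ n) \<longlongrightarrow> 0) (at_right 0)" "(p \<longlongrightarrow> 0) (at_right 0)"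
  shows "(f \<longlongrightarrow> 0) (at_right 0)"
proof -
  have "((\<lambda>\<sigma>. p \<sigma> + of_real \<sigma> ^ n * ((f \<sigma> - p \<sigma>) / of_real \<sigma> ^ n))
      \<longlongrightarrow> 0 + of_real 0 ^ n * 0) (at_right 0)"
    using assms by (intro tendsto_intros) auto
  moreover have "eventually (\<lambda>\<sigma>. p \<sigma> + of_real \<sigma> ^ n * ((f \<sigma> - p \<sigma>) / of_real \<sigma> ^ n) = f \<sigma>)
      (at_right 0)"
    using eventually_at_right_less[of 0] by eventually_elim simp
  ultimately show ?thesis by (simp add: tendsto_cong)
qed

section \<open>Sign conditions from leading coefficients\<close>

lemma rescaled_tendsto_jet12:
  fixes \<beta> :: "real \<Rightarrow> complex"
  assumes "((\<lambda>\<sigma>. (\<beta> \<sigma> - (of_real \<sigma> * \<beta>1 + of_real \<sigma> ^ 2 * \<beta>2)) / of_real \<sigma> ^ 2)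
      \<longlongrightarrow> 0) (at_right 0)"
  shows "((\<lambda>\<sigma>. Re (\<beta> \<sigma>) / \<sigma>) \<longlongrightarrow> Re \<beta>1) (at_right 0)"
    and "((\<lambda>\<sigma>. Im (\<beta> \<sigma>) / \<sigma>) \<longlongrightarrow> Im \<beta>1) (at_right 0)"
    and "Re \<beta>1 = 0 \<Longrightarrow> ((\<lambda>\<sigma>. Re (\<beta> \<sigma>) / \<sigma>\<^sup>2) \<longlongrightarrow> Re \<beta>2) (at_right 0)"
proof -
  define e where "e = (\<lambda>\<sigma>. (\<beta> \<sigma> - (of_real \<sigma> * \<beta>1 + of_real \<sigma> ^ 2 * \<beta>2)) / of_real \<sigma> ^ 2)"
  have e: "(e \<longlongrightarrow> 0) (at_right 0)"
    using assms unfolding e_def .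
  have pos: "eventually (\<lambda>\<sigma>. \<sigma> > 0) (at_right (0::real))"
    by (simp add: eventually_at_right_less)
  have "\<beta> \<sigma> = of_real \<sigma> * \<beta>1 + of_real \<sigma> ^ 2 * (\<beta>2 + e \<sigma>)" if "\<sigma> > 0" for \<sigma>
    using that by (simp add: e_def field_simps)
  then have Re_\<beta>: "Re (\<beta> \<sigma>) = \<sigma> * Re \<beta>1 + \<sigma>\<^sup>2 * Re (\<beta>2 + e \<sigma>)"
    and Im_\<beta>: "Im (\<beta> \<sigma>) = \<sigma> * Im \<beta>1 + \<sigma>\<^sup>2 * Im (\<beta>2 + e \<sigma>)" if "\<sigma> > 0" for \<sigma>
    using that by simp_all
  show "((\<lambda>\<sigma>. Re (\<beta> \<sigma>) / \<sigma>) \<longlongrightarrow> Re \<beta>1) (at_right 0)"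
  proof (rule Lim_transform_eventually)
    show "((\<lambda>\<sigma>. Re \<beta>1 + \<sigma> * Re (\<beta>2 + e \<sigma>)) \<longlongrightarrow> Re \<beta>1) (at_right 0)"
      by (auto intro!: tendsto_eq_intros e)
    show "eventually (\<lambda>\<sigma>. Re \<beta>1 + \<sigma> * Re (\<beta>2 + e \<sigma>) = Re (\<beta> \<sigma>) / \<sigma>) (at_right 0)"
      using pos by eventually_elim (simp add: Re_\<beta> field_simps power2_eq_square)
  qed
  show "((\<lambda>\<sigma>. Im (\<beta> \<sigma>) / \<sigma>) \<longlongrightarrow> Im \<beta>1) (at_right 0)"
  proof (rule Lim_transform_eventually)
    show "((\<lambda>\<sigma>. Im \<beta>1 + \<sigma> * Im (\<beta>2 + e \<sigma>)) \<longlongrightarrow> Im \<beta>1) (at_right 0)"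
      by (auto intro!: tendsto_eq_intros e)
    show "eventually (\<lambda>\<sigma>. Im \<beta>1 + \<sigma> * Im (\<beta>2 + e \<sigma>) = Im (\<beta> \<sigma>) / \<sigma>) (at_right 0)"
      using pos by eventually_elim (simp add: Im_\<beta> field_simps power2_eq_square)
  qed
  show "((\<lambda>\<sigma>. Re (\<beta> \<sigma>) / \<sigma>\<^sup>2) \<longlongrightarrow> Re \<beta>2) (at_right 0)" if "Re \<beta>1 = 0"
  proof (rule Lim_transform_eventually)
    show "((\<lambda>\<sigma>. Re (\<beta>2 + e \<sigma>)) \<longlongrightarrow> Re \<beta>2) (at_right 0)"
      by (auto intro!: tendsto_eq_intros e)
    show "eventually (\<lambda>\<sigma>. Re (\<beta>2 + e \<sigma>) = Re (\<beta> \<sigma>) / \<sigma>\<^sup>2) (at_right 0)"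
      using pos by eventually_elim (simp add: Re_\<beta> that)
  qed
qed

lemma rescaled_tendsto_jet23:
  fixes \<gamma> :: "real \<Rightarrow> complex"
  assumes "((\<lambda>\<sigma>. (\<gamma> \<sigma> - (of_real \<sigma> ^ 2 * \<gamma>2 + of_real \<sigma> ^ 3 * \<gamma>3)) / of_real \<sigma> ^ 3)
      \<longlongrightarrow> 0) (at_right 0)"
  shows "((\<lambda>\<sigma>. Re (\<gamma> \<sigma>) / \<sigma>\<^sup>2) \<longlongrightarrow> Re \<gamma>2) (at_right 0)"
    and "Im \<gamma>2 = 0 \<Longrightarrow> ((\<lambda>\<sigma>. Im (\<gamma> \<sigma>) / \<sigma> ^ 3) \<longlongrightarrow> Im \<gamma>3) (at_right 0)"
proof -
  define e where "e = (\<lambda>\<sigma>. (\<gamma> \<sigma> - (of_real \<sigma> ^ 2 * \<gamma>2 + of_real \<sigma> ^ 3 * \<gamma>3)) / of_real \<sigma> ^ 3)"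
  have e: "(e \<longlongrightarrow> 0) (at_right 0)"
    using assms unfolding e_def .
  have pos: "eventually (\<lambda>\<sigma>. \<sigma> > 0) (at_right (0::real))"
    by (simp add: eventually_at_right_less)
  have "\<gamma> \<sigma> = of_real \<sigma> ^ 2 * \<gamma>2 + of_real \<sigma> ^ 3 * (\<gamma>3 + e \<sigma>)" if "\<sigma> > 0" for \<sigma>
    using that by (simp add: e_def field_simps)
  then have Re_\<gamma>: "Re (\<gamma> \<sigma>) = \<sigma>\<^sup>2 * Re \<gamma>2 + \<sigma> ^ 3 * Re (\<gamma>3 + e \<sigma>)"
    and Im_\<gamma>: "Im (\<gamma> \<sigma>) = \<sigma>\<^sup>2 * Im \<gamma>2 + \<sigma> ^ 3 * Im (\<gamma>3 + e \<sigma>)" if "\<sigma> > 0" for \<sigma>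
    using that by simp_all
  show "((\<lambda>\<sigma>. Re (\<gamma> \<sigma>) / \<sigma>\<^sup>2) \<longlongrightarrow> Re \<gamma>2) (at_right 0)"
  proof (rule Lim_transform_eventually)
    show "((\<lambda>\<sigma>. Re \<gamma>2 + \<sigma> * Re (\<gamma>3 + e \<sigma>)) \<longlongrightarrow> Re \<gamma>2) (at_right 0)"
      by (auto intro!: tendsto_eq_intros e)
    show "eventually (\<lambda>\<sigma>. Re \<gamma>2 + \<sigma> * Re (\<gamma>3 + e \<sigma>) = Re (\<gamma> \<sigma>) / \<sigma>\<^sup>2) (at_right 0)"
      using pos by eventually_elim (simp add: Re_\<gamma> field_simps power2_eq_square power3_eq_cube)
  qed
  show "((\<lambda>\<sigma>. Im (\<gamma> \<sigma>) / \<sigma> ^ 3) \<longlongrightarrow> Im \<gamma>3) (at_right 0)" if "Im \<gamma>2 = 0"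
  proof (rule Lim_transform_eventually)
    show "((\<lambda>\<sigma>. Im (\<gamma>3 + e \<sigma>)) \<longlongrightarrow> Im \<gamma>3) (at_right 0)"
      by (auto intro!: tendsto_eq_intros e)
    show "eventually (\<lambda>\<sigma>. Im (\<gamma>3 + e \<sigma>) = Im (\<gamma> \<sigma>) / \<sigma> ^ 3) (at_right 0)"
      using pos by eventually_elim (simp add: Im_\<gamma> that)
  qed
qed

definition unstable_jet :: "complex \<Rightarrow> complex \<Rightarrow> complex \<Rightarrow> complex \<Rightarrow> bool" where
  "unstable_jet \<beta>1 \<beta>2 \<gamma>2 \<gamma>3 \<longleftrightarrow> Re \<beta>1 < 0 \<or> Re \<beta>1 = 0 \<and>
     (Re \<beta>2 < 0 \<or> hurwitz_det (Complex (Re \<beta>2) (Im \<beta>1)) (Complex (Re \<gamma>2) (Im \<gamma>3)) < 0)"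

lemma eventually_unstable_of_jet:
  fixes \<beta> \<gamma> :: "real \<Rightarrow> complex"
  assumes \<beta>: "((\<lambda>\<sigma>. (\<beta> \<sigma> - (of_real \<sigma> * \<beta>1 + of_real \<sigma> ^ 2 * \<beta>2)) / of_real \<sigma> ^ 2)
      \<longlongrightarrow> 0) (at_right 0)"
    and \<gamma>: "((\<lambda>\<sigma>. (\<gamma> \<sigma> - (of_real \<sigma> ^ 2 * \<gamma>2 + of_real \<sigma> ^ 3 * \<gamma>3)) / of_real \<sigma> ^ 3)
      \<longlongrightarrow> 0) (at_right 0)"
    and \<gamma>2: "\<gamma>2 \<in> \<real>" and jet: "unstable_jet \<beta>1 \<beta>2 \<gamma>2 \<gamma>3"
  shows "eventually (\<lambda>\<sigma>. Re (\<beta> \<sigma>) < 0 \<or> hurwitz_det (\<beta> \<sigma>) (\<gamma> \<sigma>) < 0) (at_right 0)"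
proof -
  note lim\<beta> = rescaled_tendsto_jet12[OF \<beta>] and lim\<gamma> = rescaled_tendsto_jet23[OF \<gamma>]
  have pos: "eventually (\<lambda>\<sigma>. \<sigma> > 0) (at_right (0::real))"
    by (simp add: eventually_at_right_less)
  consider "Re \<beta>1 < 0" | "Re \<beta>1 = 0" "Re \<beta>2 < 0"
    | "Re \<beta>1 = 0" "hurwitz_det (Complex (Re \<beta>2) (Im \<beta>1)) (Complex (Re \<gamma>2) (Im \<gamma>3)) < 0"
    using jet unfolding unstable_jet_def by blast
  then show ?thesis
  proof cases
    case 1
    from order_tendstoD(2)[OF lim\<beta>(1) 1] pos show ?thesis
      by eventually_elim (auto simp: divide_less_0_iff)
  next
    case 2
    from order_tendstoD(2)[OF lim\<beta>(3)[OF 2(1)] 2(2)] pos show ?thesis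
      by eventually_elim (auto simp: divide_less_0_iff)
  next
    case 3
    define B where "B \<sigma> = Complex (Re (\<beta> \<sigma>) / \<sigma>\<^sup>2) (Im (\<beta> \<sigma>) / \<sigma>)" for \<sigma>
    define C where "C \<sigma> = Complex (Re (\<gamma> \<sigma>) / \<sigma>\<^sup>2) (Im (\<gamma> \<sigma>) / \<sigma> ^ 3)" for \<sigma>
    have "Im \<gamma>2 = 0" using \<gamma>2 by (simp add: complex_is_Real_iff)
    then have "((\<lambda>\<sigma>. hurwitz_det (B \<sigma>) (C \<sigma>))
        \<longlongrightarrow> hurwitz_det (Complex (Re \<beta>2) (Im \<beta>1)) (Complex (Re \<gamma>2) (Im \<gamma>3))) (at_right 0)"
      unfolding hurwitz_det_def B_def C_def complex.sel
      by (intro tendsto_intros lim\<beta>(2) lim\<beta>(3)[OF 3(1)] lim\<gamma>)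
    from order_tendstoD(2)[OF this 3(2)] pos show ?thesis
    proof eventually_elim
      case (elim \<sigma>)
      have "hurwitz_det (\<beta> \<sigma>) (\<gamma> \<sigma>) = \<sigma> ^ 6 * hurwitz_det (B \<sigma>) (C \<sigma>)"
        using elim(2) by (intro hurwitz_det_scale) (simp_all add: B_def C_def)
      then show ?case
        using elim by (simp add: mult_pos_neg)
    qed
  qed
qed

section \<open>Choice of the ray\<close>

lemma exists_direction_hurwitz_det_neg:
  fixes \<beta> q b02 b20 c20 u0 :: real
  defines "Q \<equiv> \<lambda>u. (b02 + b20 * u)\<^sup>2 * c20 + (b02 + b20 * u) * \<beta> * q - q\<^sup>2 * u"
  assumes "u0 \<ge> 0" "Q u0 < 0"
  obtains u where "u > 0" "hurwitz_det (Complex (b02 + b20 * u) \<beta>) (Complex (c20 * u) (q * u)) < 0"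
proof -
  have "(Q \<longlongrightarrow> Q u0) (at_right u0)"
    unfolding Q_def by (intro tendsto_intros)
  then have "eventually (\<lambda>u. Q u < 0 \<and> u > u0) (at_right u0)"
    using assms(3) eventually_at_right_less[of u0] order_tendstoD(2) eventually_conj by blast
  then obtain u where u: "Q u < 0" "u > u0"
    using eventually_happens trivial_limit_at_right_real by blast
  have u_pos: "u > 0"
    using u assms(2) by linarith
  have "hurwitz_det (Complex (b02 + b20 * u) \<beta>) (Complex (c20 * u) (q * u)) = u * Q u"
    by (simp add: hurwitz_det_def Q_def power2_eq_square algebra_simps)
  also have "\<dots> < 0"
    using u_pos u by (simp add: mult_pos_neg)
  finally show ?thesis
    using that u_pos by blast
qed

lemma exists_direction_of_ind5:
  fixes \<beta> q b02 b20 c20 :: real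
  assumes "b02 > 0" "\<beta> * q + b02 * c20 < 0"
  obtains u where "u > 0" "hurwitz_det (Complex (b02 + b20 * u) \<beta>) (Complex (c20 * u) (q * u)) < 0"
proof (rule exists_direction_hurwitz_det_neg[of 0])
  have "(b02 + b20 * 0)\<^sup>2 * c20 + (b02 + b20 * 0) * \<beta> * q - q\<^sup>2 * 0 = b02 * (\<beta> * q + b02 * c20)"
    by (simp add: power2_eq_square algebra_simps)
  also have "\<dots> < 0" using assms by (simp add: mult_pos_neg)
  finally show "(b02 + b20 * 0)\<^sup>2 * c20 + (b02 + b20 * 0) * \<beta> * q - q\<^sup>2 * 0 < 0" .
qed (use that in auto)

lemma exists_direction_of_ind4:
  fixes \<beta> q b02 b20 c20 :: real
  assumes b20: "b20 > 0" and c20: "c20 > 0"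
    and ind4: "\<beta> * q * b20 + 2 * b02 * b20 * c20 - q\<^sup>2 \<le> 0"
    and ind3: "q\<^sup>2 * ((\<beta> * b20 - q)\<^sup>2 - 4 * b02 * b20 * c20) > 0"
  obtains u where "u > 0" "hurwitz_det (Complex (b02 + b20 * u) \<beta>) (Complex (c20 * u) (q * u)) < 0"
proof -
  \<comment> \<open>the vertex of the quadratic, where \<open>b02 + b20 u0 = (q\<^sup>2 - \<beta> q b20) / (2 b20 c20)\<close>\<close>
  define u0 where "u0 = (q\<^sup>2 - \<beta> * q * b20 - 2 * b02 * b20 * c20) / (2 * b20\<^sup>2 * c20)"
  have u0_nonneg: "u0 \<ge> 0"
    using b20 c20 ind4 by (simp add: u0_def)
  have "(b02 + b20 * u0)\<^sup>2 * c20 + (b02 + b20 * u0) * \<beta> * q - q\<^sup>2 * u0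
      = - (q\<^sup>2 * ((\<beta> * b20 - q)\<^sup>2 - 4 * b02 * b20 * c20)) / (4 * b20\<^sup>2 * c20)"
    using b20 c20 by (simp add: u0_def field_simps power2_eq_square)
  also have "\<dots> < 0"
    using b20 c20 ind3 by (simp add: divide_neg_pos)
  finally show ?thesis
    by (rule exists_direction_hurwitz_det_neg[OF u0_nonneg]) (rule that)
qed

definition ind3 :: "complex \<Rightarrow> complex \<Rightarrow> complex \<Rightarrow> complex \<Rightarrow> complex \<Rightarrow> complex" where
  "ind3 b01 b02 b20 c20 c21 =
     c21\<^sup>2 * (b01\<^sup>2 * b20\<^sup>2 - 2 * b01 * b20 * c21 + 4 * b02 * b20 * c20 + c21\<^sup>2)"

definition ind4 :: "complex \<Rightarrow> complex \<Rightarrow> complex \<Rightarrow> complex \<Rightarrow> complex \<Rightarrow> complex" where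
  "ind4 b01 b02 b20 c20 c21 = - b01 * b20 * c21 + 2 * b02 * b20 * c20 + c21\<^sup>2"

definition ind5 :: "complex \<Rightarrow> complex \<Rightarrow> complex \<Rightarrow> complex \<Rightarrow> complex" where
  "ind5 b01 b02 c20 c21 = - b01 * c21 + b02 * c20"

lemma ind4_real_nonposD:
  fixes \<beta> B02 B20 C20 p q :: real
  assumes pos: "B02 * B20 * C20 > 0"
    and ind4: "ind4 (Complex 0 \<beta>) (of_real B02) (of_real B20) (of_real C20) (Complex p q) \<in> \<real>"
      "Re (ind4 (Complex 0 \<beta>) (of_real B02) (of_real B20) (of_real C20) (Complex p q)) \<le> 0"
  shows "p = 0" and "\<beta> * q * B20 + 2 * B02 * B20 * C20 - q\<^sup>2 \<le> 0"
proof -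
  have Re_ind4: "Re (ind4 (Complex 0 \<beta>) (of_real B02) (of_real B20) (of_real C20) (Complex p q))
      = \<beta> * q * B20 + 2 * (B02 * B20 * C20) + p\<^sup>2 - q\<^sup>2"
    and Im_ind4: "Im (ind4 (Complex 0 \<beta>) (of_real B02) (of_real B20) (of_real C20) (Complex p q))
      = p * (2 * q - \<beta> * B20)"
    unfolding ind4_def by (simp_all add: power2_eq_square algebra_simps)
  show "p = 0"
  proof (rule ccontr)
    assume "p \<noteq> 0"
    then have "\<beta> * q * B20 = 2 * q\<^sup>2"
      using Im_ind4 ind4(1) by (simp add: complex_is_Real_iff power2_eq_square)
    then show False
      using Re_ind4 ind4(2) pos \<open>p \<noteq> 0\<close> by (smt (verit) zero_le_power2 zero_less_power2)
  qed
  then show "\<beta> * q * B20 + 2 * B02 * B20 * C20 - q\<^sup>2 \<le> 0"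
    using Re_ind4 ind4(2) by simp
qed

lemma exists_unstable_direction_positive:
  fixes b01 b02 b20 c20 c21 :: complex
  assumes b01: "Re b01 = 0" and b02: "b02 \<in> \<real>" "Re b02 > 0" and b20: "b20 \<in> \<real>" "Re b20 > 0"
    and c20: "c20 \<in> \<real>" "Re c20 > 0"
    and ind: "ind3 b01 b02 b20 c20 c21 \<in> \<real> \<and> Re (ind3 b01 b02 b20 c20 c21) > 0 \<and>
        ind4 b01 b02 b20 c20 c21 \<in> \<real> \<and> Re (ind4 b01 b02 b20 c20 c21) \<le> 0
      \<or> ind5 b01 b02 c20 c21 \<in> \<real> \<and> Re (ind5 b01 b02 c20 c21) < 0"
  obtains u where "u > 0"
    "hurwitz_det (Complex (Re b02 + Re b20 * u) (Im b01)) (Complex (Re c20 * u) (Im c21 * u)) < 0"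
proof -
  define \<beta> p q where "\<beta> = Im b01" and "p = Re c21" and "q = Im c21"
  define B02 B20 C20 where "B02 = Re b02" and "B20 = Re b20" and "C20 = Re c20"
  have coeffs: "b01 = Complex 0 \<beta>" "b02 = of_real B02" "b20 = of_real B20"
      "c20 = of_real C20" "c21 = Complex p q"
    using b01 b02 b20 c20
    by (simp_all add: \<beta>_def p_def q_def B02_def B20_def C20_def complex_eq_iff complex_is_Real_iff)
  have pos: "B02 > 0" "B20 > 0" "C20 > 0"
    using b02 b20 c20 by (simp_all add: B02_def B20_def C20_def)
  from ind obtain u where "u > 0"
    "hurwitz_det (Complex (B02 + B20 * u) \<beta>) (Complex (C20 * u) (q * u)) < 0"
    unfolding coeffs
  proof (elim disjE conjE)
    assume ind3: "ind3 (Complex 0 \<beta>) (of_real B02) (of_real B20) (of_real C20) (Complex p q) \<in> \<real>"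
      "Re (ind3 (Complex 0 \<beta>) (of_real B02) (of_real B20) (of_real C20) (Complex p q)) > 0"
      and ind4: "ind4 (Complex 0 \<beta>) (of_real B02) (of_real B20) (of_real C20) (Complex p q) \<in> \<real>"
      "Re (ind4 (Complex 0 \<beta>) (of_real B02) (of_real B20) (of_real C20) (Complex p q)) \<le> 0"
    have "B02 * B20 * C20 > 0"
      using pos by simp
    note p = ind4_real_nonposD[OF this ind4]
    have "Re (ind3 (Complex 0 \<beta>) (of_real B02) (of_real B20) (of_real C20) (Complex p q))
        = q\<^sup>2 * ((\<beta> * B20 - q)\<^sup>2 - 4 * B02 * B20 * C20)"
      unfolding ind3_def p(1) by (simp add: power2_eq_square algebra_simps)
    then show thesis
      using ind3(2) by (intro exists_direction_of_ind4[OF pos(2,3) p(2) _ that]) simp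
  next
    assume ind5: "ind5 (Complex 0 \<beta>) (of_real B02) (of_real C20) (Complex p q) \<in> \<real>"
      "Re (ind5 (Complex 0 \<beta>) (of_real B02) (of_real C20) (Complex p q)) < 0"
    then show thesis
      by (intro exists_direction_of_ind5[OF pos(1) _ that]) (simp add: ind5_def algebra_simps)
  qed
  then show ?thesis
    using that by (simp add: \<beta>_def q_def B02_def B20_def C20_def)
qed

lemma exists_unstable_direction:
  fixes b01 b02 b20 c20 c21 :: complex
  assumes c20: "c20 \<in> \<real>" "Re c20 > 0"
    and ind: "(b02 \<in> \<real> \<and> Re b02 < 0) \<or> (b20 \<in> \<real> \<and> Re b20 < 0) \<or>
      (b02 \<in> \<real> \<and> Re b02 > 0 \<and> b20 \<in> \<real> \<and> Re b20 > 0 \<and>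
       (ind3 b01 b02 b20 c20 c21 \<in> \<real> \<and> Re (ind3 b01 b02 b20 c20 c21) > 0 \<and>
          ind4 b01 b02 b20 c20 c21 \<in> \<real> \<and> Re (ind4 b01 b02 b20 c20 c21) \<le> 0
        \<or> ind5 b01 b02 c20 c21 \<in> \<real> \<and> Re (ind5 b01 b02 c20 c21) < 0))"
  obtains t s :: real where "\<bar>t\<bar> + \<bar>s\<bar> > 0"
    "unstable_jet (b01 * of_real s) (b02 * of_real s ^ 2 + b20 * of_real t ^ 2)
       (c20 * of_real t ^ 2) (c21 * of_real t ^ 2 * of_real s)"
proof -
  consider "Re b01 \<noteq> 0" | "Re b01 = 0" "b02 \<in> \<real>" "Re b02 < 0" | "b20 \<in> \<real>" "Re b20 < 0"
    | "Re b01 = 0" "b02 \<in> \<real>" "Re b02 > 0" "b20 \<in> \<real>" "Re b20 > 0"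
      "ind3 b01 b02 b20 c20 c21 \<in> \<real> \<and> Re (ind3 b01 b02 b20 c20 c21) > 0 \<and>
          ind4 b01 b02 b20 c20 c21 \<in> \<real> \<and> Re (ind4 b01 b02 b20 c20 c21) \<le> 0
        \<or> ind5 b01 b02 c20 c21 \<in> \<real> \<and> Re (ind5 b01 b02 c20 c21) < 0"
    using ind by blast
  then show ?thesis
  proof cases
    case 1
    show ?thesis
      by (rule that[of 0 "- sgn (Re b01)"]) (use 1 in \<open>auto simp: unstable_jet_def sgn_if\<close>)
  next
    case 2
    show ?thesis
      by (rule that[of 0 1]) (use 2 in \<open>auto simp: unstable_jet_def\<close>)
  next
    case 3
    show ?thesis
      by (rule that[of 1 0]) (use 3 in \<open>auto simp: unstable_jet_def complex_is_Real_iff\<close>)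
  next
    case 4
    obtain u where u: "u > 0"
      "hurwitz_det (Complex (Re b02 + Re b20 * u) (Im b01)) (Complex (Re c20 * u) (Im c21 * u)) < 0"
      using exists_unstable_direction_positive 4 c20 by blast
    show ?thesis
      by (rule that[of "sqrt u" 1]) (use 4 u in \<open>auto simp: unstable_jet_def complex_is_Real_iff intro: add_nonneg_pos\<close>)
  qed
qed

section \<open>Unstable roots\<close>

lemma exists_unstable_root_along_ray:
  fixes E h :: "complex \<Rightarrow> complex \<Rightarrow> complex \<Rightarrow> complex" and b c :: "complex \<Rightarrow> complex \<Rightarrow> complex"
  assumes factor: "\<forall>l y z. cmod l < delta \<longrightarrow> cmod y < delta \<longrightarrow> cmod z < delta \<longrightarrow>
                   E l y z = (l\<^sup>2 + b y z * l + c y z) * h l y z"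
    and delta: "delta > 0" and r: "r > 0" and ray: "\<bar>t\<bar> + \<bar>s\<bar> > 0"
    and unstable: "eventually (\<lambda>\<sigma>. Re (b (of_real (t * \<sigma>)) (of_real (s * \<sigma>))) < 0 \<or>
        hurwitz_det (b (of_real (t * \<sigma>)) (of_real (s * \<sigma>))) (c (of_real (t * \<sigma>)) (of_real (s * \<sigma>))) < 0)
        (at_right 0)"
    and b_lim: "((\<lambda>\<sigma>. b (of_real (t * \<sigma>)) (of_real (s * \<sigma>))) \<longlongrightarrow> 0) (at_right 0)"
    and c_lim: "((\<lambda>\<sigma>. c (of_real (t * \<sigma>)) (of_real (s * \<sigma>))) \<longlongrightarrow> 0) (at_right 0)"
  shows "\<exists>eta xi :: real. 0 < \<bar>eta\<bar> + \<bar>xi\<bar> \<and> \<bar>eta\<bar> + \<bar>xi\<bar> < r \<and>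
           (\<exists>l::complex. l\<^sup>2 + b (complex_of_real eta) (complex_of_real xi) * l
                           + c (complex_of_real eta) (complex_of_real xi) = 0
              \<and> Re l > 0 \<and> cmod l < r
              \<and> E l (complex_of_real eta) (complex_of_real xi) = 0)"
proof -
  define m where "m = min r delta"
  have "m > 0" using r delta by (simp add: m_def)
  have "((\<lambda>\<sigma>. \<sigma> * (\<bar>t\<bar> + \<bar>s\<bar>) + cmod (b (of_real (t * \<sigma>)) (of_real (s * \<sigma>)))
      + sqrt (cmod (c (of_real (t * \<sigma>)) (of_real (s * \<sigma>)))))
      \<longlongrightarrow> 0 * (\<bar>t\<bar> + \<bar>s\<bar>) + cmod 0 + sqrt (cmod 0)) (at_right 0)"
    by (intro tendsto_intros b_lim c_lim)
  then have "eventually (\<lambda>\<sigma>. \<sigma> * (\<bar>t\<bar> + \<bar>s\<bar>) + cmod (b (of_real (t * \<sigma>)) (of_real (s * \<sigma>)))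
      + sqrt (cmod (c (of_real (t * \<sigma>)) (of_real (s * \<sigma>)))) < m) (at_right 0)"
    using \<open>m > 0\<close> by (intro order_tendstoD(2)) auto
  then obtain \<sigma> where \<sigma>: "\<sigma> > 0"
    and small: "\<sigma> * (\<bar>t\<bar> + \<bar>s\<bar>) + cmod (b (of_real (t * \<sigma>)) (of_real (s * \<sigma>)))
        + sqrt (cmod (c (of_real (t * \<sigma>)) (of_real (s * \<sigma>)))) < m"
    and root: "Re (b (of_real (t * \<sigma>)) (of_real (s * \<sigma>))) < 0 \<or>
        hurwitz_det (b (of_real (t * \<sigma>)) (of_real (s * \<sigma>))) (c (of_real (t * \<sigma>)) (of_real (s * \<sigma>))) < 0"
    using eventually_happens[OF eventually_conj[OF eventually_at_right_less eventually_conj[OF _ unstable]]]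
    by auto
  define eta xi where "eta = t * \<sigma>" and "xi = s * \<sigma>"
  obtain l where l: "l\<^sup>2 + b (of_real eta) (of_real xi) * l + c (of_real eta) (of_real xi) = 0" "Re l > 0"
    and l_small: "cmod l \<le> cmod (b (of_real eta) (of_real xi)) + sqrt (cmod (c (of_real eta) (of_real xi)))"
    using exists_quadratic_root_Re_pos[OF root] unfolding eta_def xi_def by blast
  have sum: "\<bar>eta\<bar> + \<bar>xi\<bar> = \<sigma> * (\<bar>t\<bar> + \<bar>s\<bar>)"
    using \<sigma> by (simp add: eta_def xi_def abs_mult algebra_simps)
  then have "\<bar>eta\<bar> + \<bar>xi\<bar> + cmod l < m"
    using small l_small unfolding eta_def xi_def by linarith
  then have "\<bar>eta\<bar> + \<bar>xi\<bar> < r" "cmod l < r" and near0: "cmod l < delta" "\<bar>eta\<bar> < delta" "\<bar>xi\<bar> < delta"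
    using norm_ge_zero[of l] abs_ge_zero[of eta] abs_ge_zero[of xi] unfolding m_def by linarith+
  moreover have "E l (of_real eta) (of_real xi) = 0"
    using factor l(1) near0 by simp
  moreover have "0 < \<bar>eta\<bar> + \<bar>xi\<bar>"
    using sum \<sigma> ray by simp
  ultimately show ?thesis
    using l by blast
qed

theorem mainTheorem14:
  fixes E h :: "complex \<Rightarrow> complex \<Rightarrow> complex \<Rightarrow> complex"
    and b c :: "complex \<Rightarrow> complex \<Rightarrow> complex"
    and a ha :: "nat \<Rightarrow> nat \<Rightarrow> nat \<Rightarrow> complex"
    and bk ck :: "nat \<Rightarrow> nat \<Rightarrow> complex"
    and rho rhoh rhob rhoc delta :: real
  assumes E_an: "ps3 a rho E"
    and a_real: "\<forall>i j k. \<exists>t::real. a i j k = \<i> ^ (j + k) * complex_of_real t"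
    and E_even: "\<forall>l y z. cmod l < rho \<longrightarrow> cmod y < rho \<longrightarrow> cmod z < rho \<longrightarrow>
                   E l (- y) z = E l y z"
    and E_zero: "\<forall>z. cmod z < rho \<longrightarrow> E 0 0 z = 0"
    and a100: "a 1 0 0 = 0"
    and a200: "a 2 0 0 \<noteq> 0"
    and a020: "a 0 2 0 \<noteq> 0"
    and h_an: "ps3 ha rhoh h"
    and h0: "h 0 0 0 \<noteq> 0"
    and b_an: "ps2 bk rhob b"
    and c_an: "ps2 ck rhoc c"
    and delta: "delta > 0"
    and factor: "\<forall>l y z. cmod l < delta \<longrightarrow> cmod y < delta \<longrightarrow> cmod z < delta \<longrightarrow>
                   E l y z = (l\<^sup>2 + b y z * l + c y z) * h l y z"
    and b_low: "bk 0 0 = 0" "bk 1 0 = 0" "bk 1 1 = 0"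
    and c_low: "\<forall>k. ck 0 k = 0" "\<forall>k. ck 1 k = 0" "ck 3 0 = 0"
    and c20_pos: "ck 2 0 \<in> \<real>" "Re (ck 2 0) > 0"
    and cases:
      "let b01 = bk 0 1; b02 = bk 0 2; b20 = bk 2 0; c20 = ck 2 0; c21 = ck 2 1;
           ind1 = b02; ind2 = b20;
           ind3 = c21\<^sup>2 * (b01\<^sup>2 * b20\<^sup>2 - 2 * b01 * b20 * c21 + 4 * b02 * b20 * c20 + c21\<^sup>2);
           ind4 = - b01 * b20 * c21 + 2 * b02 * b20 * c20 + c21\<^sup>2;
           ind5 = - b01 * c21 + b02 * c20
       in ((ind1 \<in> \<real> \<and> Re ind1 < 0) \<or> (ind2 \<in> \<real> \<and> Re ind2 < 0))
        \<or> (ind1 \<in> \<real> \<and> Re ind1 > 0 \<and> ind2 \<in> \<real> \<and> Re ind2 > 0 \<and> ind3 \<in> \<real> \<and> Re ind3 > 0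
             \<and> ind4 \<in> \<real> \<and> Re ind4 \<le> 0)
        \<or> (ind1 \<in> \<real> \<and> Re ind1 > 0 \<and> ind2 \<in> \<real> \<and> Re ind2 > 0 \<and> ind3 \<in> \<real> \<and> Re ind3 > 0
             \<and> ind5 \<in> \<real> \<and> Re ind5 < 0)"
  shows "\<forall>r>0. \<exists>eta xi :: real. 0 < \<bar>eta\<bar> + \<bar>xi\<bar> \<and> \<bar>eta\<bar> + \<bar>xi\<bar> < r \<and>
           (\<exists>l::complex. l\<^sup>2 + b (complex_of_real eta) (complex_of_real xi) * l
                           + c (complex_of_real eta) (complex_of_real xi) = 0
              \<and> Re l > 0 \<and> cmod l < r
              \<and> E l (complex_of_real eta) (complex_of_real xi) = 0)"
proof (intro allI impI)
  fix r :: real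
  assume r: "r > 0"
  obtain t s where ray: "\<bar>t\<bar> + \<bar>s\<bar> > 0"
    and jet: "unstable_jet (bk 0 1 * of_real s) (bk 0 2 * of_real s ^ 2 + bk 2 0 * of_real t ^ 2)
       (ck 2 0 * of_real t ^ 2) (ck 2 1 * of_real t ^ 2 * of_real s)"
    by (rule exists_unstable_direction[where ?b01.0 = "bk 0 1" and ?b02.0 = "bk 0 2"
          and ?b20.0 = "bk 2 0" and ?c20.0 = "ck 2 0" and ?c21.0 = "ck 2 1", OF c20_pos])
      (use cases in \<open>auto simp: Let_def ind3_def ind4_def ind5_def\<close>)
  note b_jet = ps2_ray_expansion_b[OF b_an b_low, of t s]
  note c_jet = ps2_ray_expansion_c[OF c_an c_low, of t s]
  have "eventually (\<lambda>\<sigma>. Re (b (of_real (t * \<sigma>)) (of_real (s * \<sigma>))) < 0 \<or>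
      hurwitz_det (b (of_real (t * \<sigma>)) (of_real (s * \<sigma>))) (c (of_real (t * \<sigma>)) (of_real (s * \<sigma>))) < 0)
      (at_right 0)"
    using eventually_unstable_of_jet[OF b_jet c_jet _ jet] c20_pos(1) by simp
  moreover have "((\<lambda>\<sigma>. b (of_real (t * \<sigma>)) (of_real (s * \<sigma>))) \<longlongrightarrow> 0) (at_right 0)"
    by (rule tendsto_zero_of_remainder[OF b_jet]) (auto intro!: tendsto_eq_intros)
  moreover have "((\<lambda>\<sigma>. c (of_real (t * \<sigma>)) (of_real (s * \<sigma>))) \<longlongrightarrow> 0) (at_right 0)"
    by (rule tendsto_zero_of_remainder[OF c_jet]) (auto intro!: tendsto_eq_intros)
  ultimately show "\<exists>eta xi :: real. 0 < \<bar>eta\<bar> + \<bar>xi\<bar> \<and> \<bar>eta\<bar> + \<bar>xi\<bar> < r \<and>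
           (\<exists>l::complex. l\<^sup>2 + b (complex_of_real eta) (complex_of_real xi) * l
                           + c (complex_of_real eta) (complex_of_real xi) = 0
              \<and> Re l > 0 \<and> cmod l < r
              \<and> E l (complex_of_real eta) (complex_of_real xi) = 0)"
    by (rule exists_unstable_root_along_ray[OF factor delta r ray])
qed

end
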